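(* Let $D\in\mathbb{D}^n_+$, $W\in\mathbb{R}^{n\times n}$, $u\in\mathbb{R}^n$, $A:=W-D$, and $\mathcal X=\{x\in\mathbb{R}^n: Dx\in[0,1]^n\}$. Assume $A$ is Lyapunov diagonally stable with diagonal certificate $\Lambda\in\mathbb{D}^n_+$, i.e. $A^\top\Lambda+\Lambda A\prec0$. Then the projected dynamical system $\dot x=\Pi_{\mathcal X}(x,Ax+u)$ on $\mathcal X$ has a unique equilibrium $x^\star\in\mathcal X$, and there exists $\mu>0$ such that for each initial condition $x(0)\in\mathcal X$, the solution satisfies, for all $t\ge0$, $$\|x(t)-x^\star\|_\Lambda\le e^{-\mu t}\|x(0)-x^\star\|_\Lambda.$$ Thus $x^\star$ is globally exponentially stable.
   Context: $\mathbb{D}^n_+$ is the set of positive diagonal matrices. $\|x\|_\Lambda=\sqrt{x^\top\Lambda x}$. For $x\in\mathcal X$, $T_{\mathcal X}(x)$ is the tangent cone of $\mathcal X$ at $x$ and $\Pi_{\mathcal X}(x,v)=\arg\min_{y\in T_{\mathcal X}(x)}\|y-v\|^2$. Solutions of the projected dynamical system are absolutely continuous curves $x:[0,\infty)\to\mathcal X$ satisfying $\dot x(t)=\Pi_{\mathcal X}(x(t),Ax(t)+u)$ for almost every $t$; they exist and are unique for each initial condition in $\mathcal X$. *)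

theory Defs
  imports "HOL-Analysis.Analysis"
begin

definition pos_diag :: "real^'n^'n \<Rightarrow> bool" where
  "pos_diag M \<longleftrightarrow> (\<forall>i j. i \<noteq> j \<longrightarrow> M$i$j = 0) \<and> (\<forall>i. M$i$i > 0)"

definition neg_definite :: "real^'n^'n \<Rightarrow> bool" where
  "neg_definite M \<longleftrightarrow> transpose M = M \<and> (\<forall>y. y \<noteq> 0 \<longrightarrow> y \<bullet> (M *v y) < 0)"

definition wnorm :: "real^'n^'n \<Rightarrow> real^'n \<Rightarrow> real" where
  "wnorm L x = sqrt (x \<bullet> (L *v x))"

definition tangent_cone :: "'a::real_normed_vector set \<Rightarrow> 'a \<Rightarrow> 'a set" where
  "tangent_cone X x = closure {c *\<^sub>R (y - x) | c y. c > 0 \<and> y \<in> X}"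

definition proj_tc :: "'a::real_normed_vector set \<Rightarrow> 'a \<Rightarrow> 'a \<Rightarrow> 'a" where
  "proj_tc X x v = (SOME y. y \<in> tangent_cone X x \<and>
      (\<forall>z \<in> tangent_cone X x. (norm (y - v))\<^sup>2 \<le> (norm (z - v))\<^sup>2))"

definition abs_continuous_on :: "real \<Rightarrow> real \<Rightarrow> (real \<Rightarrow> 'a::real_normed_vector) \<Rightarrow> bool" where
  "abs_continuous_on a b f \<longleftrightarrow>
     (\<forall>\<epsilon>>0. \<exists>\<delta>>0. \<forall>(m::nat) (l::nat \<Rightarrow> real) (r::nat \<Rightarrow> real).
        (\<forall>k<m. a \<le> l k \<and> l k \<le> r k \<and> r k \<le> b) \<and>
        (\<forall>i<m. \<forall>j<m. i \<noteq> j \<longrightarrow> r i \<le> l j \<or> r j \<le> l i) \<and>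
        (\<Sum>k<m. r k - l k) < \<delta>
        \<longrightarrow> (\<Sum>k<m. norm (f (r k) - f (l k))) < \<epsilon>)"

definition box_set :: "real^'n^'n \<Rightarrow> (real^'n) set" where
  "box_set D = {x. \<forall>i. 0 \<le> (D *v x)$i \<and> (D *v x)$i \<le> 1}"

definition pds_solution :: "(real^'n) set \<Rightarrow> real^'n^'n \<Rightarrow> real^'n \<Rightarrow> (real \<Rightarrow> real^'n) \<Rightarrow> bool" where
  "pds_solution X A u x \<longleftrightarrow>
     (\<forall>t\<ge>0. x t \<in> X) \<and>
     (\<forall>T\<ge>0. abs_continuous_on 0 T x) \<and>
     (AE t in lborel. t \<ge> 0 \<longrightarrow>
        (x has_vector_derivative proj_tc X (x t) (A *v x t + u)) (at t within {0..}))"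

end

theory Submission
  imports Defs
begin

text \<open>
  The state space is the box \<open>[0, D\<^sup>-\<^sup>1 1]\<close>. Its tangent cones are products of half-lines, so
  the projection \<open>\<Pi>\<close> acts coordinatewise as a clamp. An equilibrium exists by Brouwer's theorem
  applied to the clamped Euler step \<open>y \<mapsto> max 0 (min hi (y + A y + u))\<close>.

  At an equilibrium \<open>x\<^sup>*\<close> every coordinate satisfies the normal-cone inequality
  \<open>(z - x\<^sup>*)\<^sub>i (A x\<^sup>* + u)\<^sub>i \<le> 0\<close>, and the clamp satisfies \<open>(x - x\<^sup>*)\<^sub>i (\<Pi>(x,v) - v)\<^sub>i \<le> 0\<close>.
  Weighting by the diagonal \<open>\<Lambda>\<close> and summing gives
  \<open>(x - x\<^sup>*)\<^sup>T \<Lambda> \<Pi>(x, A x + u) \<le> (x - x\<^sup>*)\<^sup>T \<Lambda> A (x - x\<^sup>*) \<le> -c/2 |x - x\<^sup>*|\<^sup>2\<close>, where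
  \<open>y\<^sup>T (A\<^sup>T \<Lambda> + \<Lambda> A) y \<le> -c |y|\<^sup>2\<close>. This forces uniqueness, and along a solution
  \<open>V = \<parallel>x - x\<^sup>*\<parallel>\<^sub>\<Lambda>\<^sup>2\<close> satisfies \<open>V' \<le> -2 \<mu> V\<close> almost everywhere.

  Solutions are only absolutely continuous, so the Gronwall step needs that an absolutely
  continuous function with almost everywhere nonpositive derivative is nonincreasing. This is
  proved with a gauge argument: tags in the exceptional null set get intervals inside an open set
  of small measure, and tags outside it get intervals on which the derivative is accurate.
\<close>

section \<open>Quadratic forms\<close>

lemma pos_diag_mult_vec:
  assumes "pos_diag M"
  shows "(M *v x) $ i = M$i$i * x$i"
proof -
  have "(M *v x) $ i = (\<Sum>j\<in>UNIV. M$i$j * x$j)"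
    by (simp add: matrix_vector_mult_def)
  also have "\<dots> = (\<Sum>j\<in>UNIV. if j = i then M$i$i * x$i else 0)"
    using assms unfolding pos_diag_def by (intro sum.cong) auto
  finally show ?thesis by simp
qed

lemma pos_diag_inner:
  assumes "pos_diag L"
  shows "y \<bullet> (L *v z) = (\<Sum>i\<in>UNIV. L$i$i * y$i * z$i)"
  by (simp add: inner_vec_def pos_diag_mult_vec[OF assms] mult_ac)

lemma pos_diag_transpose:
  assumes "pos_diag L"
  shows "transpose L = L"
  using assms unfolding pos_diag_def transpose_def vec_eq_iff by (metis vec_lambda_beta)

lemma neg_definite_quadratic_bound:
  fixes M :: "real^'n^'n"
  assumes "neg_definite M"
  obtains c where "c > 0" and "\<And>y. y \<bullet> (M *v y) \<le> - c * (norm y)\<^sup>2"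
proof -
  let ?q = "\<lambda>y. y \<bullet> (M *v y)"
  obtain y1 :: "real^'n" where "norm y1 = 1"
    using vector_choose_size[of 1] by auto
  then have "sphere (0::real^'n) 1 \<noteq> {}"
    by auto
  \<comment> \<open>The maximum of the form on the unit sphere is negative; homogeneity does the rest.\<close>
  then obtain y0 where y0: "y0 \<in> sphere 0 1" "\<And>y. y \<in> sphere 0 1 \<Longrightarrow> ?q y \<le> ?q y0"
    using continuous_attains_sup[OF compact_sphere _ continuous_on_inner[OF continuous_on_id]]
    by (metis continuous_on_id matrix_vector_mult_linear_continuous_on)
  have "y0 \<noteq> 0"
    using y0(1) by auto
  then have "?q y0 < 0"
    using assms by (simp add: neg_definite_def)
  then show thesis
  proof (rule that[of "- ?q y0", OF neg_0_less_iff_less[THEN iffD2]])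
    fix y :: "real^'n"
    show "?q y \<le> - (- ?q y0) * (norm y)\<^sup>2"
    proof (cases "y = 0")
      case False
      then have "(1 / norm y) *\<^sub>R y \<in> sphere 0 1"
        by simp
      from y0(2)[OF this] have "?q y / (norm y)\<^sup>2 \<le> ?q y0"
        by (simp add: matrix_vector_mult_scaleR power2_eq_square field_simps)
      with False show ?thesis
        by (simp add: divide_le_eq mult.commute)
    qed simp
  qed
qed

lemma matrix_bilinear_bound:
  fixes L :: "real^'n^'n"
  obtains K where "K > 0" and "\<And>y z. \<bar>y \<bullet> (L *v z)\<bar> \<le> K * norm y * norm z"
proof -
  obtain K where K: "K > 0" "\<And>z. norm (L *v z) \<le> norm z * K"
    using bounded_linear.pos_bounded[OF matrix_vector_mul_bounded_linear[of L]] by blast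
  have "\<bar>y \<bullet> (L *v z)\<bar> \<le> K * norm y * norm z" for y z
    using Cauchy_Schwarz_ineq2[of y "L *v z"] mult_left_mono[OF K(2)[of z] norm_ge_zero[of y]]
    by (simp add: mult_ac)
  with K(1) show thesis
    by (rule that)
qed

lemma inner_lyapunov_matrix:
  fixes A L :: "real^'n^'n"
  assumes "transpose L = L"
  shows "e \<bullet> ((transpose A ** L + L ** A) *v e) = 2 * (e \<bullet> (L *v (A *v e)))"
proof -
  have "e \<bullet> (transpose A *v (L *v e)) = (A *v e) \<bullet> (L *v e)"
    by (metis dot_lmul_matrix inner_commute vector_transpose_matrix)
  also have "\<dots> = e \<bullet> (L *v (A *v e))"
    by (metis assms dot_lmul_matrix inner_commute vector_transpose_matrix)
  finally show ?thesis
    by (simp add: matrix_vector_mult_add_rdistrib matrix_vector_mul_assoc[symmetric] inner_add_right)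
qed

lemma has_real_derivative_quadratic_form:
  fixes y :: "real \<Rightarrow> real^'n" and L :: "real^'n^'n"
  assumes "(y has_vector_derivative p) (at s within S)" and "transpose L = L"
  shows "((\<lambda>s. y s \<bullet> (L *v y s)) has_real_derivative 2 * (y s \<bullet> (L *v p))) (at s within S)"
proof -
  have "((\<lambda>s. L *v y s) has_vector_derivative L *v p) (at s within S)"
    by (rule bounded_linear.has_vector_derivative[OF matrix_vector_mul_bounded_linear assms(1)])
  from bounded_bilinear.has_vector_derivative[OF bounded_bilinear_inner assms(1) this]
  have "((\<lambda>s. y s \<bullet> (L *v y s)) has_real_derivative p \<bullet> (L *v y s) + y s \<bullet> (L *v p)) (at s within S)"
    by (simp add: has_real_derivative_iff_has_vector_derivative add.commute)
  moreover have "p \<bullet> (L *v y s) = y s \<bullet> (L *v p)"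
    by (metis assms(2) dot_lmul_matrix inner_commute vector_transpose_matrix)
  ultimately show ?thesis
    by simp
qed

lemma quadratic_form_lipschitz_on_bounded:
  fixes L :: "real^'n^'n"
  assumes "bounded S"
  obtains K where "K > 0"
    and "\<And>y z. y \<in> S \<Longrightarrow> z \<in> S \<Longrightarrow> \<bar>(y - c) \<bullet> (L *v (y - c)) - (z - c) \<bullet> (L *v (z - c))\<bar> \<le> K * norm (y - z)"
proof -
  obtain KL where KL: "KL > 0" "\<And>y z. \<bar>y \<bullet> (L *v z)\<bar> \<le> KL * norm y * norm z"
    using matrix_bilinear_bound by blast
  obtain R where R: "R > 0" "\<And>y. y \<in> S \<Longrightarrow> norm (y - c) \<le> R"
    using bounded_pos[THEN iffD1, OF bounded_translation[OF assms, of "- c"]] by force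
  show thesis
  proof (rule that[of "2 * KL * R"])
    show "0 < 2 * KL * R"
      using KL(1) R(1) by simp
    fix y z assume "y \<in> S" "z \<in> S"
    have "(y - c) \<bullet> (L *v (y - c)) - (z - c) \<bullet> (L *v (z - c))
        = (y - z) \<bullet> (L *v (y - c)) + (z - c) \<bullet> (L *v (y - z))"
      by (simp add: matrix_vector_mult_diff_distrib inner_diff_left inner_diff_right)
    also have "\<bar>\<dots>\<bar> \<le> KL * norm (y - z) * norm (y - c) + KL * norm (z - c) * norm (y - z)"
      using KL(2) by (intro abs_triangle_ineq[THEN order_trans] add_mono)
    also have "\<dots> \<le> KL * norm (y - z) * R + KL * R * norm (y - z)"
      using KL(1) R(2)[OF \<open>y \<in> S\<close>] R(2)[OF \<open>z \<in> S\<close>]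
      by (intro add_mono mult_left_mono mult_right_mono) auto
    finally show "\<bar>(y - c) \<bullet> (L *v (y - c)) - (z - c) \<bullet> (L *v (z - c))\<bar> \<le> 2 * KL * R * norm (y - z)"
      by (simp add: algebra_simps)
  qed
qed

section \<open>Tangent cones and projections on a box\<close>

lemma box_set_eq_cbox:
  assumes "pos_diag D"
  shows "box_set D = cbox 0 (\<chi> i. 1 / D$i$i)"
proof -
  have "0 \<le> d * y \<and> d * y \<le> 1 \<longleftrightarrow> 0 \<le> y \<and> y \<le> 1 / d" if "0 < d" for d y :: real
    using that by (auto simp: zero_le_mult_iff le_divide_eq mult.commute)
  moreover have "0 < D$i$i" for i
    using assms by (simp add: pos_diag_def)
  ultimately show ?thesis
    by (simp add: box_set_def mem_box_cart pos_diag_mult_vec[OF assms] set_eq_iff)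
qed

definition box_tangent_cone :: "real^'n \<Rightarrow> real^'n \<Rightarrow> real^'n \<Rightarrow> (real^'n) set" where
  "box_tangent_cone lo hi x = {z. \<forall>i. (x$i = lo$i \<longrightarrow> 0 \<le> z$i) \<and> (x$i = hi$i \<longrightarrow> z$i \<le> 0)}"

lemma closed_box_tangent_cone: "closed (box_tangent_cone lo hi x)"
proof -
  have "box_tangent_cone lo hi x =
      (\<Inter>i. {z. x$i = lo$i \<longrightarrow> 0 \<le> z$i} \<inter> {z. x$i = hi$i \<longrightarrow> z$i \<le> 0})"
    by (auto simp: box_tangent_cone_def)
  moreover have "closed {z::real^'n. P \<longrightarrow> 0 \<le> z$i}" "closed {z::real^'n. P \<longrightarrow> z$i \<le> 0}" for P i
    by (cases P; simp add: closed_halfspace_component_le_cart closed_halfspace_component_ge_cart)+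
  ultimately show ?thesis by (auto intro!: closed_INT closed_Int)
qed

lemma convex_box_tangent_cone: "convex (box_tangent_cone lo hi x)"
  unfolding box_tangent_cone_def convex_def
  by (auto intro!: add_nonneg_nonneg add_nonpos_nonpos mult_nonneg_nonpos)

lemma box_tangent_cone_feasible:
  assumes x: "x \<in> cbox lo hi" and z: "z \<in> box_tangent_cone lo hi x"
  obtains s where "0 < s" and "x + s *\<^sub>R z \<in> cbox lo hi"
proof -
  have lim: "((\<lambda>s. x$i + s * z$i) \<longlongrightarrow> x$i) (at_right 0)" for i
    by (auto intro!: tendsto_eq_intros)
  have pos: "\<forall>\<^sub>F s in at_right 0. (0::real) < s"
    by (simp add: eventually_at_right_less)
  have lower: "\<forall>\<^sub>F s in at_right 0. lo$i \<le> x$i + s * z$i" for i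
  proof (cases "x$i = lo$i")
    case True
    with z have "0 \<le> z$i" by (simp add: box_tangent_cone_def)
    with True show ?thesis using pos by (auto elim: eventually_mono)
  next
    case False
    with x have "lo$i < x$i" by (auto simp: mem_box_cart less_le)
    from order_tendstoD(1)[OF lim this] show ?thesis by (auto elim: eventually_mono)
  qed
  have upper: "\<forall>\<^sub>F s in at_right 0. x$i + s * z$i \<le> hi$i" for i
  proof (cases "x$i = hi$i")
    case True
    with z have "z$i \<le> 0" by (simp add: box_tangent_cone_def)
    with True show ?thesis using pos by (auto elim: eventually_mono simp: mult_le_0_iff)
  next
    case False
    with x have "x$i < hi$i" by (auto simp: mem_box_cart less_le)
    from order_tendstoD(2)[OF lim this] show ?thesis by (auto elim: eventually_mono)
  qed
  have "\<forall>\<^sub>F s in at_right 0. \<forall>i. lo$i \<le> x$i + s * z$i \<and> x$i + s * z$i \<le> hi$i"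
    using lower upper by (simp add: eventually_all_finite eventually_conj)
  with pos have "\<forall>\<^sub>F s in at_right 0. 0 < s \<and> x + s *\<^sub>R z \<in> cbox lo hi"
    by eventually_elim (simp add: mem_box_cart)
  then show thesis
    using that eventually_happens trivial_limit_at_right_real by blast
qed

lemma tangent_cone_cbox:
  assumes x: "x \<in> cbox lo hi"
  shows "tangent_cone (cbox lo hi) x = box_tangent_cone lo hi x"
proof
  show "tangent_cone (cbox lo hi) x \<subseteq> box_tangent_cone lo hi x"
    unfolding tangent_cone_def
  proof (rule closure_minimal[OF _ closed_box_tangent_cone], clarify)
    fix c :: real and y assume "0 < c" "y \<in> cbox lo hi"
    then show "c *\<^sub>R (y - x) \<in> box_tangent_cone lo hi x"
      using x by (auto simp: box_tangent_cone_def mem_box_cart mult_le_0_iff)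
  qed
  show "box_tangent_cone lo hi x \<subseteq> tangent_cone (cbox lo hi) x"
  proof
    fix z assume "z \<in> box_tangent_cone lo hi x"
    then obtain s where "0 < s" "x + s *\<^sub>R z \<in> cbox lo hi"
      using box_tangent_cone_feasible[OF x] by blast
    then show "z \<in> tangent_cone (cbox lo hi) x"
      unfolding tangent_cone_def
      by (intro closure_subset[THEN subsetD] CollectI exI[of _ "1 / s"] exI[of _ "x + s *\<^sub>R z"]) auto
  qed
qed

definition box_tangent_proj :: "real^'n \<Rightarrow> real^'n \<Rightarrow> real^'n \<Rightarrow> real^'n \<Rightarrow> real^'n" where
  "box_tangent_proj lo hi x v =
     (\<chi> i. if x$i = lo$i then max (v$i) 0 else if x$i = hi$i then min (v$i) 0 else v$i)"

lemma proj_tc_eq_closest_point: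
  fixes X :: "'a::euclidean_space set"
  assumes "x \<in> X" and "convex (tangent_cone X x)"
  shows "proj_tc X x v = closest_point (tangent_cone X x) v"
proof -
  let ?T = "tangent_cone X x"
  have closed: "closed ?T"
    by (simp add: tangent_cone_def)
  have "0 \<in> ?T"
    unfolding tangent_cone_def using assms(1)
    by (intro closure_subset[THEN subsetD] CollectI exI[of _ 1] exI[of _ x]) auto
  then have nonempty: "?T \<noteq> {}"
    by blast
  have sq_le: "(norm (y - v))\<^sup>2 \<le> (norm (z - v))\<^sup>2 \<longleftrightarrow> dist v y \<le> dist v z" for y z
    by (simp add: dist_norm norm_minus_commute power_mono_iff)
  show ?thesis
    unfolding proj_tc_def sq_le
  proof (rule some_equality)
    show "closest_point ?T v \<in> ?T \<and> (\<forall>z\<in>?T. dist v (closest_point ?T v) \<le> dist v z)"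
      using closest_point_exists[OF closed nonempty] by blast
    show "y = closest_point ?T v" if "y \<in> ?T \<and> (\<forall>z\<in>?T. dist v y \<le> dist v z)" for y
      using that closest_point_unique[OF assms(2) closed] by blast
  qed
qed

lemma closest_point_box_tangent_cone:
  assumes lo_hi: "\<forall>i. lo$i < hi$i"
  shows "closest_point (box_tangent_cone lo hi x) v = box_tangent_proj lo hi x v"
proof (rule closest_point_unique[symmetric, OF convex_box_tangent_cone closed_box_tangent_cone])
  show "box_tangent_proj lo hi x v \<in> box_tangent_cone lo hi x"
    using lo_hi by (auto simp: box_tangent_cone_def box_tangent_proj_def) (metis less_irrefl)
  show "\<forall>z\<in>box_tangent_cone lo hi x. dist v (box_tangent_proj lo hi x v) \<le> dist v z"
  proof
    fix z assume z: "z \<in> box_tangent_cone lo hi x"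
    have "dist (v$i) (box_tangent_proj lo hi x v $ i) \<le> dist (v$i) (z$i)" for i
      using z by (auto simp: box_tangent_cone_def box_tangent_proj_def dist_real_def)
    then show "dist v (box_tangent_proj lo hi x v) \<le> dist v z"
      unfolding dist_vec_def by (intro L2_set_mono) auto
  qed
qed

lemma proj_tc_cbox:
  assumes "x \<in> cbox lo hi" and "\<forall>i. lo$i < hi$i"
  shows "proj_tc (cbox lo hi) x v = box_tangent_proj lo hi x v"
  using assms
  by (simp add: proj_tc_eq_closest_point tangent_cone_cbox convex_box_tangent_cone
      closest_point_box_tangent_cone)

lemma box_tangent_proj_eq_0D:
  assumes "box_tangent_proj lo hi q w = 0" and "q \<in> cbox lo hi" and "z \<in> cbox lo hi"
  shows "(z$i - q$i) * w$i \<le> 0"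
proof -
  have "box_tangent_proj lo hi q w $ i = 0"
    using assms(1) by simp
  with assms(2,3) show ?thesis
    by (auto simp: box_tangent_proj_def mem_box_cart mult_le_0_iff max_def min_def
        split: if_splits)
qed

lemma box_tangent_proj_monotone:
  assumes "x \<in> cbox lo hi" and "y \<in> cbox lo hi"
  shows "(x$i - y$i) * (box_tangent_proj lo hi x v $ i - v$i) \<le> 0"
  using assms by (auto simp: box_tangent_proj_def mem_box_cart mult_le_0_iff max_def min_def)

lemma inner_box_tangent_proj_le:
  assumes L: "pos_diag L" and x: "x \<in> cbox lo hi" and y: "y \<in> cbox lo hi"
    and eq: "box_tangent_proj lo hi y w = 0"
  shows "(x - y) \<bullet> (L *v box_tangent_proj lo hi x v) \<le> (x - y) \<bullet> (L *v (v - w))"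
  unfolding pos_diag_inner[OF L]
proof (rule sum_mono)
  fix i
  have "(x$i - y$i) * box_tangent_proj lo hi x v $ i \<le> (x$i - y$i) * (v$i - w$i)"
    using box_tangent_proj_monotone[OF x y, of i v] box_tangent_proj_eq_0D[OF eq y x, of i]
    by (simp add: algebra_simps)
  moreover have "0 \<le> L$i$i"
    using L by (simp add: pos_diag_def less_imp_le)
  ultimately show "L$i$i * (x - y)$i * box_tangent_proj lo hi x v $ i \<le> L$i$i * (x - y)$i * (v - w)$i"
    by (simp add: mult.assoc mult_left_mono)
qed

section \<open>Equilibria\<close>

lemma box_tangent_proj_zero_exists:
  assumes f: "continuous_on (cbox lo hi) f" and lo_hi: "\<forall>i. lo$i < hi$i"
  obtains q where "q \<in> cbox lo hi" and "box_tangent_proj lo hi q (f q) = 0"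
proof -
  define F where "F y = (\<chi> i. max (lo$i) (min (hi$i) (y$i + f y $ i)))" for y
  have "lo \<in> cbox lo hi"
    using lo_hi by (simp add: mem_box_cart less_imp_le)
  then have box: "compact (cbox lo hi)" "convex (cbox lo hi)" "cbox lo hi \<noteq> {}"
    by auto
  have "continuous_on (cbox lo hi) F"
    unfolding F_def by (intro continuous_intros f)
  moreover have "F \<in> cbox lo hi \<rightarrow> cbox lo hi"
    using lo_hi by (auto simp: F_def mem_box_cart less_imp_le)
  ultimately obtain q where q: "q \<in> cbox lo hi" "F q = q"
    using brouwer[OF box] by blast
  have "box_tangent_proj lo hi q (f q) $ i = 0" for i
  proof -
    have "max (lo$i) (min (hi$i) (q$i + f q $ i)) = q$i"
      using q(2) by (simp add: F_def vec_eq_iff)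
    with q(1) lo_hi[rule_format, of i] show ?thesis
      by (auto simp: box_tangent_proj_def mem_box_cart max_def min_def split: if_splits)
  qed
  with q(1) show thesis
    by (intro that) (auto simp: vec_eq_iff)
qed

lemma box_equilibrium_unique:
  fixes A L :: "real^'n^'n"
  assumes L: "pos_diag L" and N: "neg_definite (transpose A ** L + L ** A)"
    and q1: "q1 \<in> cbox lo hi" "box_tangent_proj lo hi q1 (A *v q1 + u) = 0"
    and q2: "q2 \<in> cbox lo hi" "box_tangent_proj lo hi q2 (A *v q2 + u) = 0"
  shows "q1 = q2"
proof (rule ccontr)
  assume "q1 \<noteq> q2"
  then have "(q1 - q2) \<bullet> ((transpose A ** L + L ** A) *v (q1 - q2)) < 0"
    using N by (simp add: neg_definite_def)
  moreover have "0 \<le> (q1 - q2) \<bullet> (L *v (A *v (q1 - q2)))"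
    using inner_box_tangent_proj_le[OF L q1(1) q2, of "A *v q1 + u"] q1(2)
    by (simp add: matrix_vector_mult_diff_distrib)
  ultimately show False
    by (simp add: inner_lyapunov_matrix[OF pos_diag_transpose[OF L]])
qed

lemma box_tangent_proj_dissipative:
  fixes A L :: "real^'n^'n"
  assumes L: "pos_diag L" and c: "\<And>y. y \<bullet> ((transpose A ** L + L ** A) *v y) \<le> - c * (norm y)\<^sup>2"
    and y: "y \<in> cbox lo hi"
    and xs: "xs \<in> cbox lo hi" "box_tangent_proj lo hi xs (A *v xs + u) = 0"
  shows "(y - xs) \<bullet> (L *v box_tangent_proj lo hi y (A *v y + u)) \<le> - (c / 2) * (norm (y - xs))\<^sup>2"
proof -
  have "(y - xs) \<bullet> (L *v box_tangent_proj lo hi y (A *v y + u)) \<le> (y - xs) \<bullet> (L *v (A *v (y - xs)))"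
    using inner_box_tangent_proj_le[OF L y xs, of "A *v y + u"]
    by (simp add: matrix_vector_mult_diff_distrib)
  also have "\<dots> \<le> - (c / 2) * (norm (y - xs))\<^sup>2"
    using c[of "y - xs"] by (simp add: inner_lyapunov_matrix[OF pos_diag_transpose[OF L]])
  finally show ?thesis .
qed

section \<open>Absolutely continuous functions\<close>

lemma abs_continuous_on_imp_continuous_on:
  fixes f :: "real \<Rightarrow> 'a::real_normed_vector"
  assumes "abs_continuous_on a b f"
  shows "continuous_on {a..b} f"
  unfolding continuous_on_iff
proof (intro ballI allI impI)
  fix s e :: real assume s: "s \<in> {a..b}" and e: "0 < e"
  then obtain d where d: "d > 0" and small: "\<forall>(m::nat) l r. (\<forall>k<m. a \<le> l k \<and> l k \<le> r k \<and> r k \<le> b) \<and>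
      (\<forall>i<m. \<forall>j<m. i \<noteq> j \<longrightarrow> r i \<le> l j \<or> r j \<le> l i) \<and> (\<Sum>k<m. r k - l k) < d
      \<longrightarrow> (\<Sum>k<m. norm (f (r k) - f (l k))) < e"
    using assms unfolding abs_continuous_on_def by blast
  show "\<exists>d>0. \<forall>t\<in>{a..b}. dist t s < d \<longrightarrow> dist (f t) (f s) < e"
  proof (intro exI[of _ d] conjI ballI impI d)
    fix t assume "t \<in> {a..b}" "dist t s < d"
    with s small[rule_format, of 1 "\<lambda>_. min s t" "\<lambda>_. max s t"]
    show "dist (f t) (f s) < e"
      by (cases "s \<le> t") (auto simp: dist_norm dist_real_def norm_minus_commute)
  qed
qed

lemma abs_continuous_on_lipschitz_compose:
  fixes x :: "real \<Rightarrow> 'a::real_normed_vector" and h :: "real \<Rightarrow> real"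
  assumes ac: "abs_continuous_on a b x" and K: "K > 0"
    and lip: "\<And>s t. s \<in> {a..b} \<Longrightarrow> t \<in> {a..b} \<Longrightarrow> \<bar>h s - h t\<bar> \<le> K * norm (x s - x t) + K * \<bar>s - t\<bar>"
  shows "abs_continuous_on a b h"
  unfolding abs_continuous_on_def
proof (intro allI impI)
  fix e :: real assume "e > 0"
  then have e: "e / (2 * K) > 0"
    using K by simp
  then obtain d where d: "d > 0" and small: "\<forall>(m::nat) l r. (\<forall>k<m. a \<le> l k \<and> l k \<le> r k \<and> r k \<le> b) \<and>
      (\<forall>i<m. \<forall>j<m. i \<noteq> j \<longrightarrow> r i \<le> l j \<or> r j \<le> l i) \<and> (\<Sum>k<m. r k - l k) < d
      \<longrightarrow> (\<Sum>k<m. norm (x (r k) - x (l k))) < e / (2 * K)"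
    using ac unfolding abs_continuous_on_def by blast
  show "\<exists>d>0. \<forall>(m::nat) l r. (\<forall>k<m. a \<le> l k \<and> l k \<le> r k \<and> r k \<le> b) \<and>
      (\<forall>i<m. \<forall>j<m. i \<noteq> j \<longrightarrow> r i \<le> l j \<or> r j \<le> l i) \<and> (\<Sum>k<m. r k - l k) < d
      \<longrightarrow> (\<Sum>k<m. norm (h (r k) - h (l k))) < e"
  proof (intro exI[of _ "min d (e / (2 * K))"] conjI allI impI)
    show "0 < min d (e / (2 * K))"
      using d e by simp
    fix m :: nat and l r :: "nat \<Rightarrow> real"
    assume H: "(\<forall>k<m. a \<le> l k \<and> l k \<le> r k \<and> r k \<le> b) \<and>
      (\<forall>i<m. \<forall>j<m. i \<noteq> j \<longrightarrow> r i \<le> l j \<or> r j \<le> l i) \<and> (\<Sum>k<m. r k - l k) < min d (e / (2 * K))"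
    then have sx: "(\<Sum>k<m. norm (x (r k) - x (l k))) < e / (2 * K)" and sl: "(\<Sum>k<m. r k - l k) < e / (2 * K)"
      using small by auto
    have "(\<Sum>k<m. norm (h (r k) - h (l k))) \<le> (\<Sum>k<m. K * norm (x (r k) - x (l k)) + K * (r k - l k))"
    proof (rule sum_mono)
      fix k assume "k \<in> {..<m}"
      then have "a \<le> l k" "l k \<le> r k" "r k \<le> b"
        using H by auto
      then show "norm (h (r k) - h (l k)) \<le> K * norm (x (r k) - x (l k)) + K * (r k - l k)"
        using lip[of "r k" "l k"] by simp
    qed
    also have "\<dots> = K * (\<Sum>k<m. norm (x (r k) - x (l k))) + K * (\<Sum>k<m. r k - l k)"
      by (simp add: sum.distrib sum_distrib_left)
    also have "\<dots> < K * (e / (2 * K)) + K * (e / (2 * K))"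
      using sx sl K by (intro add_strict_mono mult_strict_left_mono)
    also have "\<dots> = e"
      using K by (simp add: field_simps)
    finally show "(\<Sum>k<m. norm (h (r k) - h (l k))) < e" .
  qed
qed

lemma abs_continuous_on_quadratic_form_compose:
  fixes x :: "real \<Rightarrow> real^'n" and L :: "real^'n^'n"
  assumes ac: "abs_continuous_on a b x" and S: "bounded S" and x: "\<And>s. s \<in> {a..b} \<Longrightarrow> x s \<in> S"
  shows "abs_continuous_on a b (\<lambda>s. (x s - c) \<bullet> (L *v (x s - c)))"
proof -
  obtain K where K: "K > 0" "\<And>y z. y \<in> S \<Longrightarrow> z \<in> S \<Longrightarrow>
      \<bar>(y - c) \<bullet> (L *v (y - c)) - (z - c) \<bullet> (L *v (z - c))\<bar> \<le> K * norm (y - z)"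
    using quadratic_form_lipschitz_on_bounded[OF S] by blast
  show ?thesis
  proof (rule abs_continuous_on_lipschitz_compose[OF ac K(1)])
    fix s r assume "s \<in> {a..b}" "r \<in> {a..b}"
    then have "\<bar>(x s - c) \<bullet> (L *v (x s - c)) - (x r - c) \<bullet> (L *v (x r - c))\<bar> \<le> K * norm (x s - x r)"
      using K(2) x by simp
    then show "\<bar>(x s - c) \<bullet> (L *v (x s - c)) - (x r - c) \<bullet> (L *v (x r - c))\<bar>
        \<le> K * norm (x s - x r) + K * \<bar>s - r\<bar>"
      using K(1) by (simp add: add_increasing2)
  qed
qed

lemma abs_continuous_on_finite_family:
  fixes f :: "real \<Rightarrow> 'a::real_normed_vector"
  assumes "abs_continuous_on a b f" and "e > 0"
  obtains d where "d > 0"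
    and "\<And>(I :: 'i set) l r. finite I \<Longrightarrow> (\<forall>i\<in>I. a \<le> l i \<and> l i \<le> r i \<and> r i \<le> b) \<Longrightarrow>
      (\<forall>i\<in>I. \<forall>j\<in>I. i \<noteq> j \<longrightarrow> r i \<le> l j \<or> r j \<le> l i) \<Longrightarrow> (\<Sum>i\<in>I. r i - l i) < d \<Longrightarrow>
      (\<Sum>i\<in>I. norm (f (r i) - f (l i))) < e"
proof -
  obtain d where d: "d > 0" and small: "\<forall>(m::nat) l r. (\<forall>k<m. a \<le> l k \<and> l k \<le> r k \<and> r k \<le> b) \<and>
      (\<forall>i<m. \<forall>j<m. i \<noteq> j \<longrightarrow> r i \<le> l j \<or> r j \<le> l i) \<and> (\<Sum>k<m. r k - l k) < d
      \<longrightarrow> (\<Sum>k<m. norm (f (r k) - f (l k))) < e"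
    using assms unfolding abs_continuous_on_def by blast
  show thesis
  proof (rule that[OF d])
    fix I :: "'i set" and l r
    assume I: "finite I" and iv: "\<forall>i\<in>I. a \<le> l i \<and> l i \<le> r i \<and> r i \<le> b"
      and disj: "\<forall>i\<in>I. \<forall>j\<in>I. i \<noteq> j \<longrightarrow> r i \<le> l j \<or> r j \<le> l i" and len: "(\<Sum>i\<in>I. r i - l i) < d"
    obtain g where g: "bij_betw g {..<card I} I"
      using ex_bij_betw_nat_finite[OF I] lessThan_atLeast0 by metis
    have reindex: "(\<Sum>k<card I. F (g k)) = (\<Sum>i\<in>I. F i)" for F :: "'i \<Rightarrow> real"
      by (rule sum.reindex_bij_betw[OF g])
    have "g k \<in> I" if "k < card I" for k
      using g that by (auto simp: bij_betw_def)
    moreover have "g i \<noteq> g j" if "i < card I" "j < card I" "i \<noteq> j" for i j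
      using g that by (auto simp: bij_betw_def inj_on_def)
    moreover have "(\<Sum>k<card I. r (g k) - l (g k)) < d"
      using len reindex[of "\<lambda>i. r i - l i"] by simp
    ultimately have "(\<Sum>k<card I. norm (f (r (g k)) - f (l (g k)))) < e"
      using small[rule_format, of "card I" "l \<circ> g" "r \<circ> g"] iv disj by auto
    then show "(\<Sum>i\<in>I. norm (f (r i) - f (l i))) < e"
      using reindex[of "\<lambda>i. norm (f (r i) - f (l i))"] by simp
  qed
qed

lemma negligible_small_open_superset:
  assumes "negligible N" and "d > 0"
  obtains T where "open T" "N \<subseteq> T" "T \<in> lmeasurable" "measure lebesgue T < d"
proof -
  obtain T where T: "open T" "N \<subseteq> T" "T - N \<in> lmeasurable" "measure lebesgue (T - N) < d"
    using sets_lebesgue_outer_open[OF negligible_imp_sets[OF assms(1)] assms(2)]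
    by (metis emeasure_eq_measure2 ennreal_leI linorder_not_le)
  have "T = (T - N) \<union> N"
    using T(2) by blast
  then have "T \<in> lmeasurable"
    using T(3) negligible_imp_measurable[OF assms(1)] by (metis fmeasurable.Un)
  moreover have "measure lebesgue T = measure lebesgue (T - N)"
    using assms(1) \<open>T \<in> lmeasurable\<close>
    by (simp add: measure_Diff_null_set negligible_iff_null_sets fmeasurableD)
  ultimately show thesis
    using T by (metis that)
qed

lemma interior_disjoint_intervals_separated:
  fixes l r l' r' :: real
  assumes "l < r" and "l' < r'" and "{l<..<r} \<inter> {l'<..<r'} = {}"
  shows "r \<le> l' \<or> r' \<le> l"
proof (rule ccontr)
  assume "\<not> (r \<le> l' \<or> r' \<le> l)"
  then obtain m where "max l l' < m" "m < min r r'"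
    using assms(1,2) dense[of "max l l'" "min r r'"] by auto
  with assms(3) show False
    by auto
qed

lemma tagged_division_of_real_intervalD:
  fixes a b :: real
  assumes "p tagged_division_of {a..b}" and "(t, K) \<in> p"
  shows "K = {Inf K..Sup K}" "Inf K \<le> Sup K" "a \<le> Inf K" "Sup K \<le> b" "t \<in> K"
proof -
  obtain u w where K: "K = {u..w}"
    using tagged_division_ofD(4)[OF assms] unfolding cbox_interval by blast
  moreover have "t \<in> K" "K \<subseteq> {a..b}"
    using tagged_division_ofD(2,3)[OF assms] by auto
  ultimately have "u \<le> w" "Inf K = u" "Sup K = w"
    by auto
  with K \<open>t \<in> K\<close> \<open>K \<subseteq> {a..b}\<close> show "K = {Inf K..Sup K}" "Inf K \<le> Sup K" "a \<le> Inf K" "Sup K \<le> b" "t \<in> K"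
    by auto
qed

lemma lmeasurable_tagged_division_Union:
  assumes "p tagged_division_of S" and "q \<subseteq> p"
  shows "\<Union>(snd ` q) \<in> lmeasurable"
proof (rule fmeasurable.finite_Union)
  show "finite (snd ` q)"
    using tagged_division_ofD(1)[OF assms(1)] assms(2) by (blast intro: finite_subset)
  show "snd ` q \<subseteq> lmeasurable"
    using tagged_division_ofD(4)[OF assms(1)] assms(2) by (force intro: lmeasurable_cbox)
qed

lemma tagged_division_of_real_separated:
  fixes a b :: real
  assumes p: "p tagged_division_of {a..b}" and z: "z \<in> p" "z' \<in> p" "z \<noteq> z'"
    and nondeg: "Inf (snd z) < Sup (snd z)" "Inf (snd z') < Sup (snd z')"
  shows "Sup (snd z) \<le> Inf (snd z') \<or> Sup (snd z') \<le> Inf (snd z)"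
proof (rule interior_disjoint_intervals_separated[OF nondeg])
  have zp: "(fst z, snd z) \<in> p" "(fst z', snd z') \<in> p"
    using z by simp_all
  have "interior (snd z) \<inter> interior (snd z') = {}"
    using tagged_division_ofD(5)[OF p zp] z(3) by (simp add: prod_eq_iff)
  then show "{Inf (snd z)<..<Sup (snd z)} \<inter> {Inf (snd z')<..<Sup (snd z')} = {}"
    by (metis tagged_division_of_real_intervalD(1)[OF p zp(1)] tagged_division_of_real_intervalD(1)[OF p zp(2)]
        interior_atLeastAtMost_real)
qed

lemma tagged_division_of_real_sum_lengths_le:
  fixes a b :: real
  assumes p: "p tagged_division_of {a..b}" and q: "q \<subseteq> p" and P: "P \<subseteq> q"
    and nondeg: "\<And>z. z \<in> P \<Longrightarrow> Inf (snd z) < Sup (snd z)"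
  shows "(\<Sum>z\<in>P. Sup (snd z) - Inf (snd z)) \<le> measure lebesgue (\<Union>(snd ` q))"
proof -
  have Pp: "P \<subseteq> p"
    using P q by blast
  have K: "snd z = {Inf (snd z)..Sup (snd z)}" if "z \<in> P" for z
    using tagged_division_of_real_intervalD(1)[OF p, of "fst z" "snd z"] Pp that by auto
  have "(\<Sum>z\<in>P. Sup (snd z) - Inf (snd z)) = (\<Sum>z\<in>P. measure lebesgue (snd z))"
    using K nondeg by (intro sum.cong refl)
      (metis less_imp_le measure_lborel_Icc measure_completion sets_lborel atLeastAtMost_borel)
  also have "\<dots> = measure lebesgue (\<Union>(snd ` P))"
  proof (rule measure_negligible_finite_Union_image[symmetric])
    show "finite P"
      using tagged_division_ofD(1)[OF p] Pp by (rule finite_subset[rotated])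
    show "snd z \<in> lmeasurable" if "z \<in> P" for z
      by (metis K[OF that] lmeasurable_cbox cbox_interval)
    show "pairwise (\<lambda>z z'. negligible (snd z \<inter> snd z')) P"
    proof (rule pairwiseI)
      fix z z' assume zz': "z \<in> P" "z' \<in> P" "z \<noteq> z'"
      have "snd z \<inter> snd z' = {Inf (snd z)..Sup (snd z)} \<inter> {Inf (snd z')..Sup (snd z')}"
        using K[OF zz'(1)] K[OF zz'(2)] by simp
      also have "\<dots> \<subseteq> {Sup (snd z), Sup (snd z')}"
        using tagged_division_of_real_separated[OF p zz'(1,2)[THEN subsetD[OF Pp]] zz'(3)] nondeg zz'
        by auto
      finally show "negligible (snd z \<inter> snd z')"
        by (rule negligible_subset[rotated]) auto
    qed
  qed
  also have "\<dots> \<le> measure lebesgue (\<Union>(snd ` q))"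
  proof (rule measure_mono_fmeasurable)
    show "\<Union>(snd ` P) \<subseteq> \<Union>(snd ` q)"
      using P by blast
    show "\<Union>(snd ` P) \<in> sets lebesgue"
      by (rule lmeasurable_tagged_division_Union[OF p Pp, THEN fmeasurableD])
    show "\<Union>(snd ` q) \<in> lmeasurable"
      by (rule lmeasurable_tagged_division_Union[OF p q])
  qed
  finally show ?thesis .
qed

lemma tagged_division_of_real_sum_increments_nondegenerate:
  fixes a b :: real and f :: "real \<Rightarrow> 'a::real_normed_vector"
  assumes p: "p tagged_division_of {a..b}" and q: "q \<subseteq> p"
  shows "(\<Sum>(t, K)\<in>q. f (Sup K) - f (Inf K))
      = (\<Sum>z\<in>{z \<in> q. Inf (snd z) < Sup (snd z)}. f (Sup (snd z)) - f (Inf (snd z)))"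
  unfolding case_prod_unfold
proof (rule sum.mono_neutral_right)
  show "finite q"
    using tagged_division_ofD(1)[OF p] q by (rule finite_subset[rotated])
  show "\<forall>z\<in>q - {z \<in> q. Inf (snd z) < Sup (snd z)}. f (Sup (snd z)) - f (Inf (snd z)) = 0"
  proof
    fix z assume "z \<in> q - {z \<in> q. Inf (snd z) < Sup (snd z)}"
    with q tagged_division_of_real_intervalD(2)[OF p, of "fst z" "snd z"]
    have "Inf (snd z) = Sup (snd z)"
      by auto
    then show "f (Sup (snd z)) - f (Inf (snd z)) = 0"
      by simp
  qed
qed auto

lemma abs_continuous_on_tagged_increments_small:
  fixes f :: "real \<Rightarrow> real"
  assumes "abs_continuous_on a b f" and "e > 0"
  obtains d where "d > 0"
    and "\<And>p q. p tagged_division_of {a..b} \<Longrightarrow> q \<subseteq> p \<Longrightarrow> measure lebesgue (\<Union>(snd ` q)) < d \<Longrightarrow>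
      (\<Sum>(t, K)\<in>q. f (Sup K) - f (Inf K)) < e"
proof -
  obtain d where d: "d > 0" and small: "\<And>(I :: (real \<times> real set) set) l r. finite I \<Longrightarrow>
      (\<forall>i\<in>I. a \<le> l i \<and> l i \<le> r i \<and> r i \<le> b) \<Longrightarrow>
      (\<forall>i\<in>I. \<forall>j\<in>I. i \<noteq> j \<longrightarrow> r i \<le> l j \<or> r j \<le> l i) \<Longrightarrow> (\<Sum>i\<in>I. r i - l i) < d \<Longrightarrow>
      (\<Sum>i\<in>I. norm (f (r i) - f (l i))) < e"
    by (rule abs_continuous_on_finite_family[OF assms]) (rule that)
  show thesis
  proof (rule that[OF d])
    fix p q
    assume p: "p tagged_division_of {a..b}" and q: "q \<subseteq> p"
      and meas: "measure lebesgue (\<Union>(snd ` q)) < d"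
    \<comment> \<open>Degenerate intervals contribute nothing but would break the separation property.\<close>
    define P where "P = {z \<in> q. Inf (snd z) < Sup (snd z)}"
    have "(\<Sum>(t, K)\<in>q. f (Sup K) - f (Inf K)) \<le> (\<Sum>z\<in>P. norm (f (Sup (snd z)) - f (Inf (snd z))))"
      unfolding tagged_division_of_real_sum_increments_nondegenerate[OF p q] P_def[symmetric]
      by (intro sum_mono) simp
    also have "\<dots> < e"
    proof (rule small)
      show "finite P"
        using tagged_division_ofD(1)[OF p] q by (auto simp: P_def intro: finite_subset)
      show "\<forall>z\<in>P. a \<le> Inf (snd z) \<and> Inf (snd z) \<le> Sup (snd z) \<and> Sup (snd z) \<le> b"
        using tagged_division_of_real_intervalD(3,4)[OF p] q by (fastforce simp: P_def)
      show "\<forall>z\<in>P. \<forall>z'\<in>P. z \<noteq> z' \<longrightarrow> Sup (snd z) \<le> Inf (snd z') \<or> Sup (snd z') \<le> Inf (snd z)"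
      proof (intro ballI impI)
        fix z z' assume "z \<in> P" "z' \<in> P" "z \<noteq> z'"
        with q show "Sup (snd z) \<le> Inf (snd z') \<or> Sup (snd z') \<le> Inf (snd z)"
          by (intro tagged_division_of_real_separated[OF p]) (auto simp: P_def)
      qed
      have "(\<Sum>z\<in>P. Sup (snd z) - Inf (snd z)) \<le> measure lebesgue (\<Union>(snd ` q))"
        by (rule tagged_division_of_real_sum_lengths_le[OF p q]) (auto simp: P_def)
      with meas show "(\<Sum>z\<in>P. Sup (snd z) - Inf (snd z)) < d"
        by linarith
    qed
    finally show "(\<Sum>(t, K)\<in>q. f (Sup K) - f (Inf K)) < e" .
  qed
qed

lemma increment_le_of_nonpos_linearization:
  fixes f :: "real \<Rightarrow> real"
  assumes "u \<le> t" "t \<le> w" "d \<le> 0"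
    and "\<bar>f w - f t - d * (w - t)\<bar> \<le> e * \<bar>w - t\<bar>" and "\<bar>f u - f t - d * (u - t)\<bar> \<le> e * \<bar>u - t\<bar>"
  shows "f w - f u \<le> e * (w - u)"
proof -
  have "d * (w - t) \<le> 0" "0 \<le> d * (u - t)"
    using assms(1-3) by (simp_all add: mult_nonpos_nonneg mult_nonpos_nonpos)
  with assms(1,2,4,5) show ?thesis
    by (auto simp: abs_le_iff algebra_simps)
qed

lemma gauge_for_negligible_and_derivative:
  fixes f f' :: "real \<Rightarrow> real"
  assumes T: "open T" "N \<subseteq> T" and e: "e > 0"
    and der: "\<And>t. t \<in> S - N \<Longrightarrow> (f has_real_derivative f' t) (at t within S)"
  obtains g where "\<And>t. g t > 0" and "\<And>t. t \<in> N \<Longrightarrow> ball t (g t) \<subseteq> T"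
    and "\<And>t s. t \<in> S - N \<Longrightarrow> s \<in> S \<Longrightarrow> \<bar>s - t\<bar> < g t \<Longrightarrow>
      \<bar>f s - f t - f' t * (s - t)\<bar> \<le> e * \<bar>s - t\<bar>"
proof -
  have "\<exists>g>0. (t \<in> N \<longrightarrow> ball t g \<subseteq> T) \<and> (t \<in> S - N \<longrightarrow>
      (\<forall>s\<in>S. \<bar>s - t\<bar> < g \<longrightarrow> \<bar>f s - f t - f' t * (s - t)\<bar> \<le> e * \<bar>s - t\<bar>))" for t
  proof (cases "t \<in> N")
    case True
    then show ?thesis
      using T open_contains_ball by blast
  next
    case False
    show ?thesis
    proof (cases "t \<in> S")
      case True
      with False have "\<exists>g>0. \<forall>s\<in>S. \<bar>s - t\<bar> < g \<longrightarrow> \<bar>f s - f t - f' t * (s - t)\<bar> \<le> e * \<bar>s - t\<bar>"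
        using der[of t] e unfolding has_field_derivative_def has_derivative_within_alt
        by (auto simp: real_norm_def mult.commute)
      with False show ?thesis
        by blast
    next
      case False
      with \<open>t \<notin> N\<close> show ?thesis
        by (intro exI[of _ 1]) auto
    qed
  qed
  then obtain g where "\<forall>t. g t > 0 \<and> (t \<in> N \<longrightarrow> ball t (g t) \<subseteq> T) \<and> (t \<in> S - N \<longrightarrow>
      (\<forall>s\<in>S. \<bar>s - t\<bar> < g t \<longrightarrow> \<bar>f s - f t - f' t * (s - t)\<bar> \<le> e * \<bar>s - t\<bar>))"
    by metis
  then show thesis
    by (intro that) blast+
qed

lemma tagged_division_increments_le_of_linearization:
  fixes f f' :: "real \<Rightarrow> real"
  assumes ab: "a \<le> b" and p: "p tagged_division_of {a..b}" and fine: "(\<lambda>t. ball t (g t)) fine p"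
    and e: "0 \<le> e"
    and lin: "\<And>t s. t \<in> {a..b} - N \<Longrightarrow> s \<in> {a..b} \<Longrightarrow> \<bar>s - t\<bar> < g t \<Longrightarrow>
      \<bar>f s - f t - f' t * (s - t)\<bar> \<le> e * \<bar>s - t\<bar>"
    and nonpos: "\<And>t. t \<in> {a..b} - N \<Longrightarrow> f' t \<le> 0"
  shows "(\<Sum>(t, K)\<in>{z \<in> p. fst z \<notin> N}. f (Sup K) - f (Inf K)) \<le> e * (b - a)"
proof -
  have "f (Sup K) - f (Inf K) \<le> e * measure lborel K" if "(t, K) \<in> p" "t \<notin> N" for t K
  proof -
    note K = tagged_division_of_real_intervalD[OF p that(1)]
    have ends: "Inf K \<in> K" "Sup K \<in> K" "Inf K \<le> t" "t \<le> Sup K"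
      using K(1,2,5) by (metis atLeastAtMost_iff order_refl)+
    then have t: "t \<in> {a..b} - N"
      using K(3,4) that(2) by auto
    have "K \<subseteq> ball t (g t)"
      using fine that(1) by (auto simp: fine_def)
    then have "\<bar>s - t\<bar> < g t" if "s \<in> K" for s
      using that by (auto simp: dist_real_def abs_minus_commute)
    from this[OF ends(1)] this[OF ends(2)] ends K(3,4)
    have "f (Sup K) - f (Inf K) \<le> e * (Sup K - Inf K)"
      by (intro increment_le_of_nonpos_linearization[OF ends(3,4) nonpos[OF t]] lin[OF t]) auto
    then show ?thesis
      using K(1,2) by (metis measure_lborel_Icc)
  qed
  then have "(\<Sum>(t, K)\<in>{z \<in> p. fst z \<notin> N}. f (Sup K) - f (Inf K))
      \<le> (\<Sum>(t, K)\<in>{z \<in> p. fst z \<notin> N}. e * measure lborel K)"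
    by (intro sum_mono) auto
  also have "\<dots> \<le> (\<Sum>(t, K)\<in>p. e * measure lborel K)"
    using p e by (intro sum_mono2) auto
  also have "\<dots> = e * (b - a)"
    using additive_content_tagged_division[of p a b] p ab
    by (simp add: sum_distrib_left[symmetric] case_prod_unfold cbox_interval)
  finally show ?thesis .
qed

lemma abs_continuous_on_increment_le:
  fixes f f' :: "real \<Rightarrow> real"
  assumes ab: "a \<le> b" and ac: "abs_continuous_on a b f" and N: "negligible N"
    and der: "\<And>t. t \<in> {a..b} - N \<Longrightarrow> (f has_real_derivative f' t) (at t within {a..b})"
    and nonpos: "\<And>t. t \<in> {a..b} - N \<Longrightarrow> f' t \<le> 0"
    and e: "e > 0"
  shows "f b - f a \<le> e * (b - a) + e"
proof -
  obtain d where d: "d > 0" and small: "\<And>p q. p tagged_division_of {a..b} \<Longrightarrow> q \<subseteq> p \<Longrightarrow>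
      measure lebesgue (\<Union>(snd ` q)) < d \<Longrightarrow> (\<Sum>(t, K)\<in>q. f (Sup K) - f (Inf K)) < e"
    by (rule abs_continuous_on_tagged_increments_small[OF ac e]) (rule that)
  obtain T where T: "open T" "N \<subseteq> T" "T \<in> lmeasurable" "measure lebesgue T < d"
    using negligible_small_open_superset[OF N d] by blast
  obtain g where g: "\<And>t. g t > 0" "\<And>t. t \<in> N \<Longrightarrow> ball t (g t) \<subseteq> T"
    "\<And>t s. t \<in> {a..b} - N \<Longrightarrow> s \<in> {a..b} \<Longrightarrow> \<bar>s - t\<bar> < g t \<Longrightarrow>
      \<bar>f s - f t - f' t * (s - t)\<bar> \<le> e * \<bar>s - t\<bar>"
    using gauge_for_negligible_and_derivative[OF T(1,2) e, of "{a..b}" f f'] der by metis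
  obtain p where p: "p tagged_division_of {a..b}" and fine: "(\<lambda>t. ball t (g t)) fine p"
    using fine_division_exists[OF gauge_ball_dependent, of g a b] g(1) by (auto simp: cbox_interval)
  define B where "B = {z \<in> p. fst z \<in> N}"
  \<comment> \<open>Intervals tagged in the exceptional set lie in T, so their total increment is small.\<close>
  have bad: "(\<Sum>(t, K)\<in>B. f (Sup K) - f (Inf K)) < e"
  proof (rule small[OF p])
    show B: "B \<subseteq> p"
      by (auto simp: B_def)
    have "\<Union>(snd ` B) \<subseteq> T"
      using fine g(2) by (force simp: B_def fine_def)
    then have "measure lebesgue (\<Union>(snd ` B)) \<le> measure lebesgue T"
      using lmeasurable_tagged_division_Union[OF p B] T(3) by (intro measure_mono_fmeasurable) auto
    then show "measure lebesgue (\<Union>(snd ` B)) < d"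
      using T(4) by linarith
  qed
  have "p - B = {z \<in> p. fst z \<notin> N}"
    by (auto simp: B_def)
  then have good: "(\<Sum>(t, K)\<in>p - B. f (Sup K) - f (Inf K)) \<le> e * (b - a)"
    using tagged_division_increments_le_of_linearization[OF ab p fine _ g(3) nonpos] e by simp
  have "f b - f a = (\<Sum>(t, K)\<in>p. f (Sup K) - f (Inf K))"
    using additive_tagged_division_1[OF ab p, of f] by simp
  also have "\<dots> = (\<Sum>(t, K)\<in>p - B. f (Sup K) - f (Inf K)) + (\<Sum>(t, K)\<in>B. f (Sup K) - f (Inf K))"
    using p by (intro sum.subset_diff) (auto simp: B_def)
  finally show ?thesis
    using bad good by linarith
qed

lemma abs_continuous_on_nonincreasing:
  fixes f f' :: "real \<Rightarrow> real"
  assumes "a \<le> b" and "abs_continuous_on a b f" and "negligible N"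
    and "\<And>t. t \<in> {a..b} - N \<Longrightarrow> (f has_real_derivative f' t) (at t within {a..b})"
    and "\<And>t. t \<in> {a..b} - N \<Longrightarrow> f' t \<le> 0"
  shows "f b \<le> f a"
proof (rule field_le_epsilon)
  fix e :: real assume "e > 0"
  then have e': "e / (b - a + 1) > 0"
    using assms(1) by simp
  have "f b - f a \<le> e / (b - a + 1) * (b - a) + e / (b - a + 1)"
    by (rule abs_continuous_on_increment_le[OF assms e'])
  also have "\<dots> = e / (b - a + 1) * (b - a + 1)"
    by (simp add: distrib_left)
  also have "\<dots> = e"
    using assms(1) by simp
  finally show "f b \<le> f a + e"
    by simp
qed

lemma abs_continuous_on_exp_mult:
  fixes g :: "real \<Rightarrow> real"
  assumes ab: "a \<le> b" and ac: "abs_continuous_on a b g" and k: "0 \<le> k"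
  shows "abs_continuous_on a b (\<lambda>s. exp (k * (s - a)) * g s)"
proof -
  define E where "E s = exp (k * (s - a))" for s
  obtain B where B: "\<And>s. s \<in> {a..b} \<Longrightarrow> \<bar>g s\<bar> \<le> B"
    using compact_imp_bounded[OF compact_continuous_image[OF abs_continuous_on_imp_continuous_on[OF ac]]]
    by (auto simp: bounded_iff) (blast intro: that)
  have B0: "0 \<le> B"
    using B[of a] ab by auto
  have E_le: "0 < E s" "E s \<le> E b" if "s \<le> b" for s
    using that k by (auto simp: E_def mult_left_mono)
  have E_lip: "\<bar>E s - E t\<bar> \<le> k * E b * \<bar>s - t\<bar>" if "s \<in> {a..b}" "t \<in> {a..b}" for s t
  proof (rule field_differentiable_bound[OF convex_real_interval(5) _ _ that, simplified])
    show "(E has_real_derivative k * E z) (at z within {a..b})" for z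
      unfolding E_def by (auto intro!: derivative_eq_intros)
    fix z :: real assume "a \<le> z \<and> z \<le> b"
    then show "\<bar>k * E z\<bar> \<le> k * E b"
      using E_le[of z] k by (simp add: abs_mult mult_left_mono)
  qed
  define K where "K = k * E b * B + E b + 1"
  have "0 < K"
    using E_le[of b] k B0 by (simp add: K_def add_pos_pos add_nonneg_pos)
  then show ?thesis
    unfolding E_def[symmetric]
  proof (rule abs_continuous_on_lipschitz_compose[OF ac])
    fix s t assume st: "s \<in> {a..b}" "t \<in> {a..b}"
    have "E s * g s - E t * g t = (E s - E t) * g s + E t * (g s - g t)"
      by (simp add: algebra_simps)
    then have "\<bar>E s * g s - E t * g t\<bar> \<le> \<bar>E s - E t\<bar> * \<bar>g s\<bar> + E t * \<bar>g s - g t\<bar>"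
      using E_le[of t] st by (simp add: abs_mult) (metis abs_mult abs_of_pos abs_triangle_ineq)
    also have "\<dots> \<le> (k * E b * \<bar>s - t\<bar>) * B + E b * \<bar>g s - g t\<bar>"
      using E_lip[OF st] B[OF st(1)] E_le[of t] st
      by (intro add_mono mult_mono mult_right_mono) auto
    also have "\<dots> \<le> K * norm (g s - g t) + K * \<bar>s - t\<bar>"
      using E_le[of b] k B0 by (simp add: K_def algebra_simps add_nonneg_nonneg)
    finally show "\<bar>E s * g s - E t * g t\<bar> \<le> K * norm (g s - g t) + K * \<bar>s - t\<bar>" .
  qed
qed

lemma abs_continuous_on_exp_decay:
  fixes g g' :: "real \<Rightarrow> real"
  assumes ab: "a \<le> b" and ac: "abs_continuous_on a b g" and N: "negligible N" and k: "0 \<le> k"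
    and der: "\<And>s. s \<in> {a..b} - N \<Longrightarrow> (g has_real_derivative g' s) (at s within {a..b})"
    and decay: "\<And>s. s \<in> {a..b} - N \<Longrightarrow> g' s \<le> - k * g s"
  shows "g b \<le> exp (- k * (b - a)) * g a"
proof -
  define E where "E s = exp (k * (s - a))" for s
  have "E b * g b \<le> E a * g a"
  proof (rule abs_continuous_on_nonincreasing[OF ab _ N])
    show "abs_continuous_on a b (\<lambda>s. E s * g s)"
      unfolding E_def by (rule abs_continuous_on_exp_mult[OF ab ac k])
    fix s assume s: "s \<in> {a..b} - N"
    have "(E has_real_derivative k * E s) (at s within {a..b})"
      unfolding E_def by (auto intro!: derivative_eq_intros)
    from DERIV_mult[OF this der[OF s]]
    show "((\<lambda>s. E s * g s) has_real_derivative E s * (k * g s + g' s)) (at s within {a..b})"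
      by (simp add: algebra_simps)
    show "E s * (k * g s + g' s) \<le> 0"
      using decay[OF s] by (simp add: E_def mult_nonneg_nonpos)
  qed
  then have "exp (- k * (b - a)) * E b * g b \<le> exp (- k * (b - a)) * g a"
    by (simp add: E_def mult.assoc)
  moreover have "exp (- k * (b - a)) * E b = 1"
    unfolding E_def by (simp add: exp_add[symmetric])
  ultimately show ?thesis
    by (metis mult_1)
qed

section \<open>Exponential stability\<close>

lemma pds_solution_has_vector_derivative_ae:
  assumes "pds_solution X A u x"
  obtains N where "negligible N"
    and "\<And>s. 0 \<le> s \<Longrightarrow> s \<notin> N \<Longrightarrow>
      (x has_vector_derivative proj_tc X (x s) (A *v x s + u)) (at s within {0..})"
proof -
  have "AE s in lebesgue. 0 \<le> s \<longrightarrow> (x has_vector_derivative proj_tc X (x s) (A *v x s + u)) (at s within {0..})"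
    using assms unfolding pds_solution_def by (blast intro: AE_completion)
  then obtain N where "negligible N" and "{s. \<not> (0 \<le> s \<longrightarrow>
      (x has_vector_derivative proj_tc X (x s) (A *v x s + u)) (at s within {0..}))} \<subseteq> N"
    unfolding eventually_ae_filter_negligible by blast
  then show thesis
    by (intro that) auto
qed

lemma pds_solution_box_decay:
  fixes A L :: "real^'n^'n"
  assumes lo_hi: "\<forall>i. lo$i < hi$i" and L: "pos_diag L"
    and xs: "xs \<in> cbox lo hi" "box_tangent_proj lo hi xs (A *v xs + u) = 0"
    and c: "c > 0" "\<And>y. y \<bullet> ((transpose A ** L + L ** A) *v y) \<le> - c * (norm y)\<^sup>2"
    and K: "K > 0" "\<And>y z. \<bar>y \<bullet> (L *v z)\<bar> \<le> K * norm y * norm z"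
    and x: "pds_solution (cbox lo hi) A u x" and t: "0 \<le> t"
  shows "wnorm L (x t - xs) \<le> exp (- (c / (2 * K)) * t) * wnorm L (x 0 - xs)"
proof -
  define V where "V s = (x s - xs) \<bullet> (L *v (x s - xs))" for s
  define p where "p s = box_tangent_proj lo hi (x s) (A *v x s + u)" for s
  have inX: "x s \<in> cbox lo hi" if "0 \<le> s" for s
    using x that by (simp add: pds_solution_def)
  obtain N where N: "negligible N" and dx0: "\<And>s. 0 \<le> s \<Longrightarrow> s \<notin> N \<Longrightarrow>
      (x has_vector_derivative proj_tc (cbox lo hi) (x s) (A *v x s + u)) (at s within {0..})"
    by (rule pds_solution_has_vector_derivative_ae[OF x]) (rule that)
  have "V t \<le> exp (- (c / K) * (t - 0)) * V 0"
  proof (rule abs_continuous_on_exp_decay[OF t _ N])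
    show "abs_continuous_on 0 t V"
      unfolding V_def using x t inX
      by (intro abs_continuous_on_quadratic_form_compose[OF _ bounded_cbox]) (auto simp: pds_solution_def)
    show "0 \<le> c / K"
      using c(1) K(1) by simp
    fix s assume s: "s \<in> {0..t} - N"
    then have s0: "0 \<le> s"
      by simp
    have "(x has_vector_derivative proj_tc (cbox lo hi) (x s) (A *v x s + u)) (at s within {0..})"
      using s by (intro dx0) auto
    then have "(x has_vector_derivative p s) (at s within {0..t})"
      unfolding p_def proj_tc_cbox[OF inX[OF s0] lo_hi]
      by (rule has_vector_derivative_within_subset) auto
    from has_vector_derivative_diff[OF this has_vector_derivative_const]
    show "(V has_real_derivative 2 * ((x s - xs) \<bullet> (L *v p s))) (at s within {0..t})"
      unfolding V_def by (intro has_real_derivative_quadratic_form pos_diag_transpose[OF L]) simp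
    have "2 * ((x s - xs) \<bullet> (L *v p s)) \<le> - c * (norm (x s - xs))\<^sup>2"
      using box_tangent_proj_dissipative[OF L c(2) inX xs, of s] s by (simp add: p_def)
    moreover have "c / K * V s \<le> c * (norm (x s - xs))\<^sup>2"
      using K(2)[of "x s - xs" "x s - xs"] c(1) K(1)
      by (simp add: V_def field_simps power2_eq_square)
    ultimately show "2 * ((x s - xs) \<bullet> (L *v p s)) \<le> - (c / K) * V s"
      by simp
  qed
  then have "sqrt (V t) \<le> sqrt ((exp (- (c / (2 * K)) * t))\<^sup>2 * V 0)"
    by (simp add: power2_eq_square exp_add[symmetric])
  then show ?thesis
    by (simp add: wnorm_def V_def real_sqrt_mult)
qed

lemma box_pds_exponentially_stable:
  fixes A L :: "real^'n^'n"
  assumes lo_hi: "\<forall>i. lo$i < hi$i" and L: "pos_diag L" and N: "neg_definite (transpose A ** L + L ** A)"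
    and xs: "xs \<in> cbox lo hi" "box_tangent_proj lo hi xs (A *v xs + u) = 0"
  shows "\<exists>\<mu>>0. \<forall>x. pds_solution (cbox lo hi) A u x \<longrightarrow>
           (\<forall>t\<ge>0. wnorm L (x t - xs) \<le> exp (- \<mu> * t) * wnorm L (x 0 - xs))"
proof -
  obtain c where c: "c > 0" "\<And>y. y \<bullet> ((transpose A ** L + L ** A) *v y) \<le> - c * (norm y)\<^sup>2"
    using neg_definite_quadratic_bound[OF N] by blast
  obtain K where K: "K > 0" "\<And>y z. \<bar>y \<bullet> (L *v z)\<bar> \<le> K * norm y * norm z"
    using matrix_bilinear_bound by blast
  show ?thesis
  proof (intro exI[of _ "c / (2 * K)"] conjI allI impI)
    show "0 < c / (2 * K)"
      using c(1) K(1) by simp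
    fix x and t :: real
    assume "pds_solution (cbox lo hi) A u x" "0 \<le> t"
    then show "wnorm L (x t - xs) \<le> exp (- (c / (2 * K)) * t) * wnorm L (x 0 - xs)"
      by (rule pds_solution_box_decay[OF lo_hi L xs c K])
  qed
qed

theorem theorem1:
  fixes D W L :: "real^'n^'n" and u :: "real^'n"
  assumes "pos_diag D" and "pos_diag L"
    and "neg_definite (transpose (W - D) ** L + L ** (W - D))"
  shows "\<exists>xs. xs \<in> box_set D \<and> proj_tc (box_set D) xs ((W - D) *v xs + u) = 0
           \<and> (\<forall>y \<in> box_set D. proj_tc (box_set D) y ((W - D) *v y + u) = 0 \<longrightarrow> y = xs)
           \<and> (\<exists>\<mu>>0. \<forall>x. pds_solution (box_set D) (W - D) u x \<longrightarrow>
                 (\<forall>t\<ge>0. wnorm L (x t - xs) \<le> exp (- \<mu> * t) * wnorm L (x 0 - xs)))"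
proof -
  define hi :: "real^'n" where "hi = (\<chi> i. 1 / D$i$i)"
  have X: "box_set D = cbox 0 hi"
    unfolding hi_def by (rule box_set_eq_cbox[OF assms(1)])
  have lo_hi: "\<forall>i. 0$i < hi$i"
    using assms(1) by (simp add: hi_def pos_diag_def)
  have "continuous_on (cbox 0 hi) (\<lambda>y. (W - D) *v y + u)"
    by (intro continuous_intros)
  then obtain xs where xs: "xs \<in> cbox 0 hi" "box_tangent_proj 0 hi xs ((W - D) *v xs + u) = 0"
    by (rule box_tangent_proj_zero_exists[OF _ lo_hi]) (rule that)
  show ?thesis
    unfolding X
  proof (intro exI[of _ xs] conjI ballI impI)
    show "xs \<in> cbox 0 hi" "proj_tc (cbox 0 hi) xs ((W - D) *v xs + u) = 0"
      using xs proj_tc_cbox[OF xs(1) lo_hi] by simp_all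
    show "y = xs" if "y \<in> cbox 0 hi" "proj_tc (cbox 0 hi) y ((W - D) *v y + u) = 0" for y
      using box_equilibrium_unique[OF assms(2,3) that(1) _ xs] that proj_tc_cbox[OF that(1) lo_hi] by simp
    show "\<exists>\<mu>>0. \<forall>x. pds_solution (cbox 0 hi) (W - D) u x \<longrightarrow>
        (\<forall>t\<ge>0. wnorm L (x t - xs) \<le> exp (- \<mu> * t) * wnorm L (x 0 - xs))"
      by (rule box_pds_exponentially_stable[OF lo_hi assms(2,3) xs])
  qed
qed

end
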